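(* Let $N\in\mathbb{N}$. Let $$\mathcal{B}(N)=\{(q_1,q_2)\in\mathbb{Z}^2\mid 4q_1^2+4q_2^2+4q_1q_2+2q_1+3q_2=N\},$$ let $\mathcal{U}(12N+7)=\{(x,y)\in\mathbb{Z}^2\mid x^2+3y^2=12N+7\}$, and let $\varphi:\mathcal{B}(N)\to\mathcal{U}(12N+7)$ be the (well-defined) map $\varphi(q_1,q_2)=(6q_2+2,\,4q_1+2q_2+1)$. Let the Klein four-group $V_4$ act on $\mathcal{U}(12N+7)$ by sign changes of each coordinate, i.e. its nontrivial elements send $(x,y)$ to $(-x,y)$, $(x,-y)$, $(-x,-y)$. Then: (1) the action of $V_4$ on $\mathcal{U}(12N+7)$ is free; (2) $\varphi(\mathcal{B}(N))$ is a complete set of representatives of the $V_4$-orbits of $\mathcal{U}(12N+7)$.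
   Context: The expression $4q_1^2+4q_2^2+4q_1q_2+2q_1+3q_2$ is the $\Lambda_0$-atomic length of the element $q=q_1\varepsilon_1+q_2\varepsilon_2-(q_1+q_2)\varepsilon_3$ of the lattice $M$ in affine type $D_4^{(3)}$, so $\mathcal{B}(N)$ parametrises the affine Grassmannian elements of type $D_4^{(3)}$ of atomic length $N$. *)

theory Defs
  imports Main
begin

definition B_set :: "nat \<Rightarrow> (int \<times> int) set" where
  "B_set N = {(q1, q2). 4*q1^2 + 4*q2^2 + 4*q1*q2 + 2*q1 + 3*q2 = int N}"

definition U_set :: "int \<Rightarrow> (int \<times> int) set" where
  "U_set M = {(x, y). x^2 + 3*y^2 = M}"

definition phi :: "int \<times> int \<Rightarrow> int \<times> int" where
  "phi = (\<lambda>(q1, q2). (6*q2 + 2, 4*q1 + 2*q2 + 1))"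

text \<open>Klein four-group V4 modelled as bool \<times> bool (componentwise xor),
  identity (False, False); (a,b) flips the sign of x iff a, of y iff b.\<close>
definition v4_act :: "bool \<times> bool \<Rightarrow> int \<times> int \<Rightarrow> int \<times> int" where
  "v4_act = (\<lambda>(a, b) (x, y). (if a then - x else x, if b then - y else y))"

definition v4_orbit :: "int \<times> int \<Rightarrow> (int \<times> int) set" where
  "v4_orbit u = {v4_act g u | g. True}"

end

theory Submission
  imports Defs
begin

text \<open>
  The map \<open>\<phi>\<close> sends \<open>\<int>\<^sup>2\<close> onto the points \<open>(x, y)\<close> with \<open>x \<equiv> 2 (mod 6)\<close> and
  \<open>x + y \<equiv> 3 (mod 4)\<close>, and \<open>(6q\<^sub>2 + 2)\<^sup>2 + 3(4q\<^sub>1 + 2q\<^sub>2 + 1)\<^sup>2 = 12(4q\<^sub>1\<^sup>2 + 4q\<^sub>2\<^sup>2 + 4q\<^sub>1q\<^sub>2 + 2q\<^sub>1 + 3q\<^sub>2) + 7\<close>,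
  so \<open>\<phi>(\<B>(N))\<close> is the set of such points of \<open>\<U>(12N + 7)\<close>.
  Reducing \<open>x\<^sup>2 + 3y\<^sup>2 = 12N + 7\<close> modulo 4 and modulo 3 shows that every point of
  \<open>\<U>(12N + 7)\<close> has \<open>x\<close> even and prime to 3 and \<open>y\<close> odd. Hence no coordinate vanishes,
  so the action is free; and exactly one of \<open>\<plusminus>x\<close> is \<open>2 mod 6\<close>, after which exactly one
  of \<open>\<plusminus>y\<close> makes \<open>x + y \<equiv> 3 (mod 4)\<close>.
\<close>

lemma phi_sum_of_squares:
  "phi (q1, q2) = (x, y) \<Longrightarrow>
    x^2 + 3*y^2 = 12 * (4*q1^2 + 4*q2^2 + 4*q1*q2 + 2*q1 + 3*q2) + 7"
  by (auto simp: phi_def power2_eq_square algebra_simps)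

lemma range_phi: "range phi = {(x::int, y). x mod 6 = 2 \<and> (x + y) mod 4 = 3}"
proof (intro set_eqI iffI)
  fix r assume "r \<in> range phi"
  then show "r \<in> {(x::int, y). x mod 6 = 2 \<and> (x + y) mod 4 = 3}"
    by (auto simp: phi_def) presburger+
next
  fix r assume "r \<in> {(x::int, y). x mod 6 = 2 \<and> (x + y) mod 4 = 3}"
  then obtain x y where r: "r = (x, y)" and x: "x mod 6 = 2" and xy: "(x + y) mod 4 = 3"
    by auto
  define q2 where "q2 = (x - 2) div 6"
  define q1 where "q1 = (y - 1 - 2*q2) div 4"
  have x_eq: "x = 6*q2 + 2" using x unfolding q2_def by presburger
  have "4 dvd y - 1 - 2*q2" using xy unfolding x_eq by presburger
  then have "y = 4*q1 + 2*q2 + 1" unfolding q1_def by simp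
  with x_eq have "phi (q1, q2) = r" by (simp add: phi_def r)
  then show "r \<in> range phi" by (metis rangeI)
qed

lemma image_phi_B_set: "phi ` B_set N = U_set (12 * int N + 7) \<inter> range phi"
proof (intro set_eqI iffI)
  fix r assume "r \<in> phi ` B_set N"
  then obtain q1 q2 where "(q1, q2) \<in> B_set N" "r = phi (q1, q2)" by auto
  then show "r \<in> U_set (12 * int N + 7) \<inter> range phi"
    using phi_sum_of_squares[of q1 q2] by (cases r) (auto simp: B_set_def U_set_def)
next
  fix r assume r: "r \<in> U_set (12 * int N + 7) \<inter> range phi"
  then obtain q1 q2 where q: "r = phi (q1, q2)" by auto
  then have "(q1, q2) \<in> B_set N"
    using r phi_sum_of_squares[of q1 q2] by (cases r) (auto simp: B_set_def U_set_def)
  with q show "r \<in> phi ` B_set N" by blast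
qed

lemma square_mod_4: "(x::int)^2 mod 4 = (if even x then 0 else 1)"
proof -
  have "x mod 4 = 0 \<or> x mod 4 = 1 \<or> x mod 4 = 2 \<or> x mod 4 = 3" by presburger
  moreover have "x^2 mod 4 = (x mod 4)^2 mod 4" by (simp add: power_mod)
  ultimately show ?thesis by (elim disjE) (simp_all, presburger+)
qed

lemma square_mod_3: "(x::int)^2 mod 3 = (if 3 dvd x then 0 else 1)"
proof -
  have "x mod 3 = 0 \<or> x mod 3 = 1 \<or> x mod 3 = 2" by presburger
  moreover have "x^2 mod 3 = (x mod 3)^2 mod 3" by (simp add: power_mod)
  ultimately show ?thesis by (elim disjE) (simp_all, presburger+)
qed

lemma U_set_12_7_coordinates:
  assumes "(x, y) \<in> U_set (12 * n + 7)"
  shows "even x \<and> \<not> 3 dvd x \<and> odd y"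
proof -
  \<comment> \<open>Abstracting the squares leaves a linear problem for \<open>presburger\<close>.\<close>
  obtain X Y where X: "x^2 = X" and Y: "y^2 = Y" by blast
  have e: "X + 3*Y = 12 * n + 7" using assms X Y by (simp add: U_set_def)
  have "X mod 4 = (if even x then 0 else 1)" "Y mod 4 = (if even y then 0 else 1)"
    "X mod 3 = (if 3 dvd x then 0 else 1)"
    using X Y square_mod_4 square_mod_3 by metis+
  with e show ?thesis
    by (cases "even x"; cases "even y"; cases "3 dvd x") (simp_all; presburger)+
qed

lemma v4_act_eq_self_iff:
  "v4_act (a, b) (x, y) = (x, y) \<longleftrightarrow> (a \<longrightarrow> x = 0) \<and> (b \<longrightarrow> y = 0)"
  by (auto simp: v4_act_def)

lemma mem_v4_orbit:
  "(a, b) \<in> v4_orbit (x, y) \<longleftrightarrow> (a = x \<or> a = -x) \<and> (b = y \<or> b = -y)"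
proof
  assume "(a, b) \<in> v4_orbit (x, y)"
  then obtain g where "(a, b) = v4_act g (x, y)" by (auto simp: v4_orbit_def)
  then show "(a = x \<or> a = -x) \<and> (b = y \<or> b = -y)"
    by (cases g) (auto simp: v4_act_def split: if_splits)
next
  assume "(a = x \<or> a = -x) \<and> (b = y \<or> b = -y)"
  then have "(a, b) = v4_act (a \<noteq> x, b \<noteq> y) (x, y)"
    by (auto simp: v4_act_def)
  then show "(a, b) \<in> v4_orbit (x, y)" by (auto simp: v4_orbit_def)
qed

lemma v4_orbit_subset_U_set: "u \<in> U_set M \<Longrightarrow> v4_orbit u \<subseteq> U_set M"
  by (auto simp: U_set_def mem_v4_orbit)

lemma ex1_v4_orbit_range_phi:
  fixes x y :: int
  assumes "even x" "\<not> 3 dvd x" "odd y"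
  shows "\<exists>!r. r \<in> v4_orbit (x, y) \<and> r \<in> range phi"
proof -
  define a where "a = (if x mod 6 = 2 then x else -x)"
  define b where "b = (if (a + y) mod 4 = 3 then y else -y)"
  have a: "a mod 6 = 2" "\<And>a'. a' = x \<or> a' = -x \<Longrightarrow> a' mod 6 = 2 \<Longrightarrow> a' = a"
    using assms unfolding a_def by presburger+
  have b: "(a + b) mod 4 = 3" "\<And>b'. b' = y \<or> b' = -y \<Longrightarrow> (a + b') mod 4 = 3 \<Longrightarrow> b' = b"
    using assms a(1) unfolding b_def by presburger+
  show ?thesis
  proof (rule ex1I[of _ "(a, b)"])
    show "(a, b) \<in> v4_orbit (x, y) \<and> (a, b) \<in> range phi"
      using a(1) b(1) by (simp add: mem_v4_orbit range_phi a_def b_def)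
  next
    fix r assume "r \<in> v4_orbit (x, y) \<and> r \<in> range phi"
    then show "r = (a, b)"
      using a(2) b(2) by (cases r) (auto simp: mem_v4_orbit range_phi)
  qed
qed

theorem theorem8p27:
  fixes N :: nat
  shows "phi ` B_set N \<subseteq> U_set (12 * int N + 7)
    \<and> (\<forall>u\<in>U_set (12 * int N + 7). \<forall>g. v4_act g u = u \<longrightarrow> g = (False, False))
    \<and> (\<forall>u\<in>U_set (12 * int N + 7). \<exists>!r. r \<in> phi ` B_set N \<and> r \<in> v4_orbit u)"
proof (intro conjI ballI allI impI)
  show "phi ` B_set N \<subseteq> U_set (12 * int N + 7)"
    by (simp add: image_phi_B_set)
next
  fix u g assume u: "u \<in> U_set (12 * int N + 7)" and fixed: "v4_act g u = u"
  obtain x y where xy: "u = (x, y)" by force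
  have "even x \<and> \<not> 3 dvd x \<and> odd y"
    using U_set_12_7_coordinates u xy by blast
  then have "x \<noteq> 0" "y \<noteq> 0" by auto
  with fixed xy show "g = (False, False)"
    by (cases g) (simp add: v4_act_eq_self_iff)
next
  fix u assume u: "u \<in> U_set (12 * int N + 7)"
  obtain x y where xy: "u = (x, y)" by force
  have "even x \<and> \<not> 3 dvd x \<and> odd y"
    using U_set_12_7_coordinates u xy by blast
  then have "\<exists>!r. r \<in> v4_orbit u \<and> r \<in> range phi"
    unfolding xy by (elim conjE) (rule ex1_v4_orbit_range_phi)
  moreover have "r \<in> phi ` B_set N \<and> r \<in> v4_orbit u \<longleftrightarrow> r \<in> v4_orbit u \<and> r \<in> range phi"
    for r
    using v4_orbit_subset_U_set[OF u] by (auto simp: image_phi_B_set)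
  ultimately show "\<exists>!r. r \<in> phi ` B_set N \<and> r \<in> v4_orbit u"
    by (simp only:)
qed

end
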